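(* Let $x\in Y_{G,b,P_\delta}$, $(u,v)\in P\times P$, $W\le Q_{u,v,x}$, let $w\in P$ with $(w,w)\in Q_{u,v,x}$, and let $(a,a^x)\in Q_x$. Then, as maps in cohomology, (i) $\theta^*_{wua,\,wva^x,\,x}=\theta^*_{u,v,x}$ and $\gamma_{wua,\,wva^x,\,x}=\gamma_{u,v,x}$; (ii) $\pi^*_{wua,\,wva^x,\,x}=\pi^*_{u,v,x}$.
   Context: $G$ is a finite group, $k$ an algebraically closed field of characteristic $p$, $b$ a block idempotent of $kG$ with defect pointed group $P_\delta$, and $i\in\delta$ a source idempotent; $ikGi$ is the source algebra, a $k[P\times P]$-module via $(u,v)\cdot m=umv^{-1}$, and a $k\Delta P$-module by restriction to $\Delta P=\{(w,w)\mid w\in P\}$. Conjugation: ${}^xa=xax^{-1}$, $a^x=x^{-1}ax$. There is a subset $Y_{G,b,P_\delta}$ of a system of representatives of $P\backslash G/P$ and a fixed isomorphism of $k[P\times P]$-modules $s:ikGi\to\bigoplus_{x\in Y_{G,b,P_\delta}}k[PxP]$. $Q_x:=\{(a,a^x)\mid a\in P\cap{}^xP\}$, $Q_{u,v,x}:=\Delta P\cap{}^{(u,v)}Q_x$. $\theta_{u,v,x}:k\to ikGi$, $\alpha\mapsto\alpha s^{-1}(uxv^{-1})$; $\pi_{u,v,x}:ikGi\to k$, $m\mapsto\delta_{u,v,x}(\pi_x(s(m)))$, where $\pi_x$ is the projection onto $k[PxP]$ and $\delta_{u,v,x}(\mathfrak u x\mathfrak v)=1$ if $(\mathfrak u,\mathfrak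 v^{-1})\in Q_{u,v,x}(u,v)Q_x$ and $0$ otherwise. These are $kW$-module maps for $W\le Q_{u,v,x}$ ($k$ trivial), inducing $\theta^*_{u,v,x}:\mathrm{H}^*(W,k)\to\mathrm{H}^*(W,ikGi)$ and $\pi^*_{u,v,x}:\mathrm{H}^*(W,ikGi)\to\mathrm{H}^*(W,k)$. $\gamma_{u,v,x}:=\mathrm{tr}^{\Delta P}_{Q_{u,v,x}}\circ\theta^*_{u,v,x}:\mathrm{H}^*(Q_{u,v,x},k)\to\mathrm{H}^*(\Delta P,ikGi)$ (with $\theta^*$ taken for $W=Q_{u,v,x}$). *)

theory Defs
  imports "HOL-Algebra.Coset" "HOL-Computational_Algebra.Polynomial" "HOL-Library.Function_Algebras"
begin

text \<open>For a group (HOL-Algebra structure) Gam, a subgroup W, an abelian group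
  of coefficients with carrier Mc (a subset of a type of class ab_group_add) and an
  action act of W on it, H^n(W,M) is computed with the standard homogeneous resolution:
  n-cochains are W-equivariant functions W^(n+1) -> M (represented as functions on
  lists, only their values on lists of length n+1 over W matter).\<close>

definition tuples :: "'h set \<Rightarrow> nat \<Rightarrow> 'h list set" where
  "tuples W n = {gs. length gs = n \<and> set gs \<subseteq> W}"

definition hcochain ::
  "('h,'z) monoid_scheme \<Rightarrow> 'h set \<Rightarrow> 'm set \<Rightarrow> ('h \<Rightarrow> 'm \<Rightarrow> 'm) \<Rightarrow> nat \<Rightarrow> ('h list \<Rightarrow> 'm) \<Rightarrow> bool" where
  "hcochain Gam W Mc act n f \<longleftrightarrow>
     (\<forall>gs \<in> tuples W (Suc n). f gs \<in> Mc \<and>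
        (\<forall>w\<in>W. f (map (\<lambda>g. w \<otimes>\<^bsub>Gam\<^esub> g) gs) = act w (f gs)))"

definition hcobound :: "nat \<Rightarrow> ('h list \<Rightarrow> 'm::ab_group_add) \<Rightarrow> 'h list \<Rightarrow> 'm" where
  "hcobound n f gs =
     (\<Sum>i\<le>Suc n. (if even i then f (take i gs @ drop (Suc i) gs)
                            else - f (take i gs @ drop (Suc i) gs)))"

definition hcocycle ::
  "('h,'z) monoid_scheme \<Rightarrow> 'h set \<Rightarrow> 'm::ab_group_add set \<Rightarrow> ('h \<Rightarrow> 'm \<Rightarrow> 'm) \<Rightarrow> nat \<Rightarrow> ('h list \<Rightarrow> 'm) \<Rightarrow> bool" where
  "hcocycle Gam W Mc act n f \<longleftrightarrow>
     hcochain Gam W Mc act n f \<and> (\<forall>gs \<in> tuples W (Suc (Suc n)). hcobound n f gs = 0)"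

definition hcohomologous ::
  "('h,'z) monoid_scheme \<Rightarrow> 'h set \<Rightarrow> 'm::ab_group_add set \<Rightarrow> ('h \<Rightarrow> 'm \<Rightarrow> 'm) \<Rightarrow> nat
     \<Rightarrow> ('h list \<Rightarrow> 'm) \<Rightarrow> ('h list \<Rightarrow> 'm) \<Rightarrow> bool" where
  "hcohomologous Gam W Mc act n f f' \<longleftrightarrow>
     (case n of
        0 \<Rightarrow> (\<forall>gs \<in> tuples W 1. f gs = f' gs)
      | Suc m \<Rightarrow> (\<exists>e. hcochain Gam W Mc act m e \<and>
                     (\<forall>gs \<in> tuples W (Suc n). f gs - f' gs = hcobound m e gs)))"

definition hclass ::
  "('h,'z) monoid_scheme \<Rightarrow> 'h set \<Rightarrow> 'm::ab_group_add set \<Rightarrow> ('h \<Rightarrow> 'm \<Rightarrow> 'm) \<Rightarrow> nat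
     \<Rightarrow> ('h list \<Rightarrow> 'm) \<Rightarrow> ('h list \<Rightarrow> 'm) set" where
  "hclass Gam W Mc act n f = {f'. hcocycle Gam W Mc act n f' \<and> hcohomologous Gam W Mc act n f f'}"

definition Hcoh ::
  "('h,'z) monoid_scheme \<Rightarrow> 'h set \<Rightarrow> 'm::ab_group_add set \<Rightarrow> ('h \<Rightarrow> 'm \<Rightarrow> 'm) \<Rightarrow> nat
     \<Rightarrow> ('h list \<Rightarrow> 'm) set set" where
  "Hcoh Gam W Mc act n = hclass Gam W Mc act n ` {f. hcocycle Gam W Mc act n f}"

definition coh_map ::
  "('h,'z) monoid_scheme \<Rightarrow> 'h set \<Rightarrow> 'n::ab_group_add set \<Rightarrow> ('h \<Rightarrow> 'n \<Rightarrow> 'n) \<Rightarrow> nat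
     \<Rightarrow> ('m \<Rightarrow> 'n) \<Rightarrow> ('h list \<Rightarrow> 'm) set \<Rightarrow> ('h list \<Rightarrow> 'n) set" where
  "coh_map Gam W Nc actN n phi X = (\<Union>f\<in>X. hclass Gam W Nc actN n (phi \<circ> f))"

text \<open>With T a left transversal of
  K in L and kappa(y) = y t' where t' \<in> T with y^{-1} \<in> t' K (so kappa(k y) = k kappa(y),
  kappa(y) \<in> K), the transfer of a K-cochain f is
  (h_0,...,h_n) |-> sum_{t\<in>T} t . f(kappa(t^{-1}h_0),...,kappa(t^{-1}h_n)).\<close>

definition left_transversal :: "('h,'z) monoid_scheme \<Rightarrow> 'h set \<Rightarrow> 'h set \<Rightarrow> 'h set \<Rightarrow> bool" where
  "left_transversal Gam K L T \<longleftrightarrow> T \<subseteq> L \<and> (\<forall>l\<in>L. \<exists>!t. t \<in> T \<and> l \<in> t <#\<^bsub>Gam\<^esub> K)"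

definition tr_kappa :: "('h,'z) monoid_scheme \<Rightarrow> 'h set \<Rightarrow> 'h set \<Rightarrow> 'h \<Rightarrow> 'h" where
  "tr_kappa Gam K T y = y \<otimes>\<^bsub>Gam\<^esub> (THE t'. t' \<in> T \<and> inv\<^bsub>Gam\<^esub> y \<in> t' <#\<^bsub>Gam\<^esub> K)"

definition transfer_cochain ::
  "('h,'z) monoid_scheme \<Rightarrow> 'h set \<Rightarrow> 'h set \<Rightarrow> ('h \<Rightarrow> 'm::ab_group_add \<Rightarrow> 'm)
     \<Rightarrow> ('h list \<Rightarrow> 'm) \<Rightarrow> 'h list \<Rightarrow> 'm" where
  "transfer_cochain Gam K T act f gs =
     (\<Sum>t\<in>T. act t (f (map (\<lambda>h. tr_kappa Gam K T (inv\<^bsub>Gam\<^esub> t \<otimes>\<^bsub>Gam\<^esub> h)) gs)))"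

definition transfer ::
  "('h,'z) monoid_scheme \<Rightarrow> 'h set \<Rightarrow> 'h set \<Rightarrow> 'm::ab_group_add set \<Rightarrow> ('h \<Rightarrow> 'm \<Rightarrow> 'm) \<Rightarrow> nat
     \<Rightarrow> ('h list \<Rightarrow> 'm) set \<Rightarrow> ('h list \<Rightarrow> 'm) set" where
  "transfer Gam K L Mc act n X =
     (let T = (SOME T. left_transversal Gam K L T)
      in (\<Union>f\<in>X. hclass Gam L Mc act n (transfer_cochain Gam K T act f)))"

text \<open>Elements of kG are functions G -> k vanishing outside the carrier.\<close>

definition galg :: "('g,'z) monoid_scheme \<Rightarrow> ('g \<Rightarrow> 'k::field) set" where
  "galg G = {a. \<forall>h. h \<notin> carrier G \<longrightarrow> a h = 0}"

definition gbas :: "('g,'z) monoid_scheme \<Rightarrow> 'g \<Rightarrow> 'g \<Rightarrow> 'k::field" where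
  "gbas G g = (\<lambda>h. if h = g then 1 else 0)"

definition gmult :: "('g,'z) monoid_scheme \<Rightarrow> ('g \<Rightarrow> 'k::field) \<Rightarrow> ('g \<Rightarrow> 'k) \<Rightarrow> 'g \<Rightarrow> 'k" where
  "gmult G a c = (\<lambda>h. if h \<in> carrier G
        then (\<Sum>g\<in>carrier G. a g * c (inv\<^bsub>G\<^esub> g \<otimes>\<^bsub>G\<^esub> h)) else 0)"

definition galg_center :: "('g,'z) monoid_scheme \<Rightarrow> ('g \<Rightarrow> 'k::field) set" where
  "galg_center G = {z \<in> galg G. \<forall>a \<in> galg G. gmult G z a = gmult G a z}"

definition gidem :: "('g,'z) monoid_scheme \<Rightarrow> ('g \<Rightarrow> 'k::field) \<Rightarrow> bool" where
  "gidem G e \<longleftrightarrow> gmult G e e = e"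

definition block_idempotent :: "('g,'z) monoid_scheme \<Rightarrow> ('g \<Rightarrow> 'k::field) \<Rightarrow> bool" where
  "block_idempotent G b \<longleftrightarrow> b \<in> galg_center G \<and> gidem G b \<and> b \<noteq> 0 \<and>
     (\<forall>e \<in> galg_center G. gidem G e \<and> gmult G e b = e \<longrightarrow> e = 0 \<or> e = b)"

definition block_alg :: "('g,'z) monoid_scheme \<Rightarrow> ('g \<Rightarrow> 'k::field) \<Rightarrow> ('g \<Rightarrow> 'k) set" where
  "block_alg G b = {gmult G a b | a. a \<in> galg G}"

definition fixed_pts :: "('g,'z) monoid_scheme \<Rightarrow> ('g \<Rightarrow> 'k::field) \<Rightarrow> 'g set \<Rightarrow> ('g \<Rightarrow> 'k) set" where
  "fixed_pts G b H = {a \<in> block_alg G b. \<forall>h\<in>H.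
        gmult G (gmult G (gbas G h) a) (gbas G (inv\<^bsub>G\<^esub> h)) = a}"

definition prim_idem_in :: "('g,'z) monoid_scheme \<Rightarrow> ('g \<Rightarrow> 'k::field) set \<Rightarrow> ('g \<Rightarrow> 'k) \<Rightarrow> bool" where
  "prim_idem_in G B i \<longleftrightarrow> i \<in> B \<and> gidem G i \<and> i \<noteq> 0 \<and>
     (\<forall>e\<in>B. gidem G e \<and> gmult G e i = e \<and> gmult G i e = e \<longrightarrow> e = 0 \<or> e = i)"

text \<open>A point of H on kGb: the ((kGb)^H)^x-conjugacy class of a primitive idempotent
  of (kGb)^H (whose unit element is b).\<close>

definition is_point :: "('g,'z) monoid_scheme \<Rightarrow> ('g \<Rightarrow> 'k::field) \<Rightarrow> 'g set \<Rightarrow> ('g \<Rightarrow> 'k) set \<Rightarrow> bool" where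
  "is_point G b H \<alpha> \<longleftrightarrow> (\<exists>i. prim_idem_in G (fixed_pts G b H) i \<and>
      \<alpha> = {gmult G (gmult G u i) u' | u u'. u \<in> fixed_pts G b H \<and> u' \<in> fixed_pts G b H \<and>
              gmult G u u' = b \<and> gmult G u' u = b})"

definition centralizer_in :: "('g,'z) monoid_scheme \<Rightarrow> 'g set \<Rightarrow> 'g set" where
  "centralizer_in G H = {g \<in> carrier G. \<forall>h\<in>H. g \<otimes>\<^bsub>G\<^esub> h = h \<otimes>\<^bsub>G\<^esub> g}"

definition brauer :: "('g,'z) monoid_scheme \<Rightarrow> 'g set \<Rightarrow> ('g \<Rightarrow> 'k::field) \<Rightarrow> 'g \<Rightarrow> 'k" where
  "brauer G H a = (\<lambda>g. if g \<in> centralizer_in G H then a g else 0)"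

definition p_subgroup :: "('g,'z) monoid_scheme \<Rightarrow> nat \<Rightarrow> 'g set \<Rightarrow> bool" where
  "p_subgroup G p H \<longleftrightarrow> subgroup H G \<and> (\<exists>n. card H = p ^ n)"

definition local_point :: "('g,'z) monoid_scheme \<Rightarrow> ('g \<Rightarrow> 'k::field) \<Rightarrow> 'g set \<Rightarrow> ('g \<Rightarrow> 'k) set \<Rightarrow> bool" where
  "local_point G b H \<alpha> \<longleftrightarrow> is_point G b H \<alpha> \<and> (\<exists>i\<in>\<alpha>. brauer G H i \<noteq> 0)"

definition pointed_le :: "('g,'z) monoid_scheme \<Rightarrow> 'g set \<Rightarrow> ('g \<Rightarrow> 'k::field) set \<Rightarrow> 'g set \<Rightarrow> ('g \<Rightarrow> 'k) set \<Rightarrow> bool" where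
  "pointed_le G Q \<epsilon> P \<delta> \<longleftrightarrow> Q \<subseteq> P \<and> (\<exists>i\<in>\<delta>. \<exists>j\<in>\<epsilon>. gmult G i j = j \<and> gmult G j i = j)"

definition defect_pointed_group ::
  "('g,'z) monoid_scheme \<Rightarrow> nat \<Rightarrow> ('g \<Rightarrow> 'k::field) \<Rightarrow> 'g set \<Rightarrow> ('g \<Rightarrow> 'k) set \<Rightarrow> bool" where
  "defect_pointed_group G p b P \<delta> \<longleftrightarrow> p_subgroup G p P \<and> local_point G b P \<delta> \<and>
     (\<forall>Q \<epsilon>. p_subgroup G p Q \<and> local_point G b Q \<epsilon> \<and> pointed_le G P \<delta> Q \<epsilon> \<longrightarrow> Q = P \<and> \<epsilon> = \<delta>)"

definition source_alg :: "('g,'z) monoid_scheme \<Rightarrow> ('g \<Rightarrow> 'k::field) \<Rightarrow> ('g \<Rightarrow> 'k) set" where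
  "source_alg G i = {gmult G (gmult G i a) i | a. a \<in> galg G}"

definition bimod_act :: "('g,'z) monoid_scheme \<Rightarrow> 'g \<times> 'g \<Rightarrow> ('g \<Rightarrow> 'k::field) \<Rightarrow> 'g \<Rightarrow> 'k" where
  "bimod_act G uv m = gmult G (gmult G (gbas G (fst uv)) m) (gbas G (inv\<^bsub>G\<^esub> (snd uv)))"

definition triv_act :: "'h \<Rightarrow> 'k \<Rightarrow> 'k" where
  "triv_act h \<alpha> = \<alpha>"

definition dcoset :: "('g,'z) monoid_scheme \<Rightarrow> 'g set \<Rightarrow> 'g \<Rightarrow> 'g set" where
  "dcoset G P x = {u \<otimes>\<^bsub>G\<^esub> x \<otimes>\<^bsub>G\<^esub> v | u v. u \<in> P \<and> v \<in> P}"

definition dcoset_reps_subset :: "('g,'z) monoid_scheme \<Rightarrow> 'g set \<Rightarrow> 'g set \<Rightarrow> bool" where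
  "dcoset_reps_subset G P Y \<longleftrightarrow> Y \<subseteq> carrier G \<and>
     (\<forall>x\<in>Y. \<forall>y\<in>Y. dcoset G P x = dcoset G P y \<longrightarrow> x = y)"

text \<open>Since distinct double cosets are disjoint, \<Oplus>_{x\<in>Y} k[PxP] is realised as the
  k-valued functions on G supported in the union of the PxP, x \<in> Y; the projection
  pi_x is restriction to PxP.\<close>

definition perm_mod :: "('g,'z) monoid_scheme \<Rightarrow> 'g set \<Rightarrow> 'g set \<Rightarrow> ('g \<Rightarrow> 'k::field) set" where
  "perm_mod G P Y = {f \<in> galg G. \<forall>g. f g \<noteq> 0 \<longrightarrow> g \<in> (\<Union>x\<in>Y. dcoset G P x)}"

definition perm_act :: "('g,'z) monoid_scheme \<Rightarrow> 'g \<times> 'g \<Rightarrow> ('g \<Rightarrow> 'k::field) \<Rightarrow> 'g \<Rightarrow> 'k" where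
  "perm_act G uv f = (\<lambda>g. if g \<in> carrier G
       then f (inv\<^bsub>G\<^esub> (fst uv) \<otimes>\<^bsub>G\<^esub> g \<otimes>\<^bsub>G\<^esub> snd uv) else 0)"

definition Delta :: "'g set \<Rightarrow> ('g \<times> 'g) set" where
  "Delta P = {(w, w) | w. w \<in> P}"

definition Qx :: "('g,'z) monoid_scheme \<Rightarrow> 'g set \<Rightarrow> 'g \<Rightarrow> ('g \<times> 'g) set" where
  "Qx G P x = {(a, inv\<^bsub>G\<^esub> x \<otimes>\<^bsub>G\<^esub> a \<otimes>\<^bsub>G\<^esub> x) | a.
        a \<in> P \<and> inv\<^bsub>G\<^esub> x \<otimes>\<^bsub>G\<^esub> a \<otimes>\<^bsub>G\<^esub> x \<in> P}"

definition Quvx :: "('g,'z) monoid_scheme \<Rightarrow> 'g set \<Rightarrow> 'g \<Rightarrow> 'g \<Rightarrow> 'g \<Rightarrow> ('g \<times> 'g) set" where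
  "Quvx G P u v x = Delta P \<inter>
     {(u \<otimes>\<^bsub>G\<^esub> c \<otimes>\<^bsub>G\<^esub> inv\<^bsub>G\<^esub> u, v \<otimes>\<^bsub>G\<^esub> d \<otimes>\<^bsub>G\<^esub> inv\<^bsub>G\<^esub> v) | c d. (c, d) \<in> Qx G P x}"

definition theta_map ::
  "('g,'z) monoid_scheme \<Rightarrow> ('g \<Rightarrow> 'k::field) set \<Rightarrow> (('g \<Rightarrow> 'k) \<Rightarrow> ('g \<Rightarrow> 'k)) \<Rightarrow> 'g \<Rightarrow> 'g \<Rightarrow> 'g
     \<Rightarrow> 'k \<Rightarrow> 'g \<Rightarrow> 'k" where
  "theta_map G M s u v x = (\<lambda>\<alpha>. (\<lambda>g. \<alpha> * inv_into M s (gbas G (u \<otimes>\<^bsub>G\<^esub> x \<otimes>\<^bsub>G\<^esub> inv\<^bsub>G\<^esub> v)) g))"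

text \<open>delta_{u,v,x} on the basis PxP of k[PxP]: the value at uu x vv is 1 iff
  (uu, vv^{-1}) \<in> Q_{u,v,x} (u,v) Q_x (well defined).\<close>

definition delta_ind :: "('g,'z) monoid_scheme \<Rightarrow> 'g set \<Rightarrow> 'g \<Rightarrow> 'g \<Rightarrow> 'g \<Rightarrow> 'g \<Rightarrow> bool" where
  "delta_ind G P u v x g \<longleftrightarrow> (\<exists>uu vv. uu \<in> P \<and> vv \<in> P \<and> g = uu \<otimes>\<^bsub>G\<^esub> x \<otimes>\<^bsub>G\<^esub> vv \<and>
      (uu, inv\<^bsub>G\<^esub> vv) \<in> (Quvx G P u v x <#>\<^bsub>G \<times>\<times> G\<^esub> {(u, v)}) <#>\<^bsub>G \<times>\<times> G\<^esub> Qx G P x)"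

definition pi_map ::
  "('g,'z) monoid_scheme \<Rightarrow> 'g set \<Rightarrow> (('g \<Rightarrow> 'k::field) \<Rightarrow> ('g \<Rightarrow> 'k)) \<Rightarrow> 'g \<Rightarrow> 'g \<Rightarrow> 'g
     \<Rightarrow> ('g \<Rightarrow> 'k) \<Rightarrow> 'k" where
  "pi_map G P s u v x m = (\<Sum>g\<in>dcoset G P x. if delta_ind G P u v x g then s m g else 0)"

definition theta_star where
  "theta_star G P M s u v x W n =
     coh_map (G \<times>\<times> G) W M (bimod_act G) n (theta_map G M s u v x)"

definition pi_star where
  "pi_star G P s u v x W n =
     coh_map (G \<times>\<times> G) W UNIV triv_act n (pi_map G P s u v x)"

definition gamma_map where
  "gamma_map G P M s u v x n X =
     transfer (G \<times>\<times> G) (Quvx G P u v x) (Delta P) M (bimod_act G) n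
        (theta_star G P M s u v x (Quvx G P u v x) n X)"

end

theory Submission
  imports Defs
begin

text \<open>Write \<open>y = u x v\<inverse>\<close>. Both \<open>Q\<^sub>u\<^sub>,\<^sub>v\<^sub>,\<^sub>x\<close> and \<open>\<theta>\<^sub>u\<^sub>,\<^sub>v\<^sub>,\<^sub>x\<close> only depend on \<open>y\<close>:
  \<open>Q\<^sub>u\<^sub>,\<^sub>v\<^sub>,\<^sub>x\<close> is the diagonal of the centralizer of \<open>y\<close> in \<open>P\<close>. Replacing \<open>(u, v)\<close> by
  \<open>(w u a, w v a\<^sup>x)\<close> replaces \<open>y\<close> by \<open>w y w\<inverse>\<close>, which is \<open>y\<close> again because \<open>(w, w) \<in> Q\<^sub>u\<^sub>,\<^sub>v\<^sub>,\<^sub>x\<close>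
  means that \<open>w\<close> centralizes \<open>y\<close>. Hence \<open>\<theta>\<^sup>*\<close>, \<open>Q\<^sub>u\<^sub>,\<^sub>v\<^sub>,\<^sub>x\<close> and \<open>\<gamma>\<close> are unchanged. The map
  \<open>\<pi>\<^sub>u\<^sub>,\<^sub>v\<^sub>,\<^sub>x\<close> only depends on the double coset \<open>Q\<^sub>u\<^sub>,\<^sub>v\<^sub>,\<^sub>x (u, v) Q\<^sub>x\<close>, and since \<open>Q\<^sub>u\<^sub>,\<^sub>v\<^sub>,\<^sub>x\<close>
  and \<open>Q\<^sub>x\<close> are subgroups of \<open>G \<times> G\<close>, this double coset does not change when its
  representative is multiplied by \<open>(w, w) \<in> Q\<^sub>u\<^sub>,\<^sub>v\<^sub>,\<^sub>x\<close> on the left and \<open>(a, a\<^sup>x) \<in> Q\<^sub>x\<close> on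
  the right.\<close>

context group
begin

lemma inv_mult_cancel_left [simp]:
  "a \<in> carrier G \<Longrightarrow> b \<in> carrier G \<Longrightarrow> inv a \<otimes> (a \<otimes> b) = b"
  by (simp add: m_assoc [symmetric])

lemma mult_inv_cancel_left [simp]:
  "a \<in> carrier G \<Longrightarrow> b \<in> carrier G \<Longrightarrow> a \<otimes> (inv a \<otimes> b) = b"
  by (simp add: m_assoc [symmetric])

lemma conj_fixed_iff_commute:
  assumes "e \<in> carrier G" "y \<in> carrier G"
  shows "inv y \<otimes> e \<otimes> y = e \<longleftrightarrow> e \<otimes> y = y \<otimes> e"
proof -
  have "inv y \<otimes> e \<otimes> y = e \<longleftrightarrow> e = inv y \<otimes> (e \<otimes> y)"
    using assms by (auto simp: m_assoc)
  also have "\<dots> \<longleftrightarrow> e \<otimes> y = y \<otimes> e"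
    using assms by (simp add: inv_solve_left)
  finally show ?thesis .
qed

lemma double_coset_change_rep:
  assumes Q: "subgroup Q G" and R: "subgroup R G"
    and q: "q \<in> Q" and g: "g \<in> carrier G" and r: "r \<in> R"
  shows "(Q <#> {q \<otimes> g \<otimes> r}) <#> R = (Q <#> {g}) <#> R"
proof -
  have QG: "Q \<subseteq> carrier G" and RG: "R \<subseteq> carrier G" using Q R subgroup.subset by auto
  have qG: "q \<in> carrier G" and rG: "r \<in> carrier G" using q r QG RG by auto
  have "Q <#> {q \<otimes> g \<otimes> r} = ((Q #> q) #> g) #> r"
    using QG qG g rG by (simp add: coset_mult_assoc r_coset_eq_set_mult [symmetric])
  also have "\<dots> = (Q #> g) #> r" using coset_join2 [OF qG Q q] by simp
  finally have "(Q <#> {q \<otimes> g \<otimes> r}) <#> R = (Q #> g) <#> (r <# R)"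
    using QG RG g rG by (simp add: rcos_assoc_lcos r_coset_subset_G)
  also have "\<dots> = (Q <#> {g}) <#> R"
    using coset_join3 [OF rG R r] by (simp add: r_coset_eq_set_mult)
  finally show ?thesis .
qed

lemma diag_centralizer_subgroup:
  assumes P: "subgroup P G" and y: "y \<in> carrier G"
  shows "subgroup {(e, e) | e. e \<in> P \<and> e \<otimes> y = y \<otimes> e} (G \<times>\<times> G)"
proof -
  interpret GG: group "G \<times>\<times> G" by (rule DirProd_group [OF is_group is_group])
  have PG: "\<And>e. e \<in> P \<Longrightarrow> e \<in> carrier G" by (rule subgroup.mem_carrier [OF P])
  show ?thesis
  proof (rule GG.subgroupI)
    show "{(e, e) | e. e \<in> P \<and> e \<otimes> y = y \<otimes> e} \<subseteq> carrier (G \<times>\<times> G)"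
      using PG by auto
    have "(\<one>, \<one>) \<in> {(e, e) | e. e \<in> P \<and> e \<otimes> y = y \<otimes> e}"
      using subgroup.one_closed [OF P] y by auto
    then show "{(e, e) | e. e \<in> P \<and> e \<otimes> y = y \<otimes> e} \<noteq> {}" by blast
  next
    fix q assume "q \<in> {(e, e) | e. e \<in> P \<and> e \<otimes> y = y \<otimes> e}"
    then obtain c where q: "q = (c, c)" "c \<in> P" and c: "c \<otimes> y = y \<otimes> c" by blast
    have cG: "c \<in> carrier G" using PG q by blast
    have "inv y \<otimes> inv c \<otimes> y = inv (inv y \<otimes> c \<otimes> y)"
      using cG y by (simp add: inv_mult_group m_assoc)
    also have "\<dots> = inv c" using conj_fixed_iff_commute [OF cG y] c by simp
    finally have "inv y \<otimes> inv c \<otimes> y = inv c" .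
    then have "inv c \<otimes> y = y \<otimes> inv c"
      using conj_fixed_iff_commute [of "inv c" y] cG y by simp
    then show "inv\<^bsub>G \<times>\<times> G\<^esub> q \<in> {(e, e) | e. e \<in> P \<and> e \<otimes> y = y \<otimes> e}"
      using q cG P by (simp add: subgroup.m_inv_closed is_group)
  next
    fix q r assume "q \<in> {(e, e) | e. e \<in> P \<and> e \<otimes> y = y \<otimes> e}"
      "r \<in> {(e, e) | e. e \<in> P \<and> e \<otimes> y = y \<otimes> e}"
    then obtain c d where q: "q = (c, c)" "c \<in> P" "c \<otimes> y = y \<otimes> c"
      and r: "r = (d, d)" "d \<in> P" "d \<otimes> y = y \<otimes> d" by blast
    have cG: "c \<in> carrier G" and dG: "d \<in> carrier G" using PG q r by auto
    have "c \<otimes> d \<otimes> y = c \<otimes> (y \<otimes> d)" using cG dG y r(3) by (simp add: m_assoc)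
    also have "\<dots> = y \<otimes> (c \<otimes> d)" using cG dG y q(3) by (simp add: m_assoc [symmetric])
    finally have "c \<otimes> d \<otimes> y = y \<otimes> (c \<otimes> d)" .
    then show "q \<otimes>\<^bsub>G \<times>\<times> G\<^esub> r \<in> {(e, e) | e. e \<in> P \<and> e \<otimes> y = y \<otimes> e}"
      using q r P by (simp add: subgroup.m_closed)
  qed
qed

lemma Qx_subgroup:
  assumes P: "subgroup P G" and x: "x \<in> carrier G"
  shows "subgroup (Qx G P x) (G \<times>\<times> G)"
proof -
  interpret GG: group "G \<times>\<times> G" by (rule DirProd_group [OF is_group is_group])
  have PG: "\<And>e. e \<in> P \<Longrightarrow> e \<in> carrier G" by (rule subgroup.mem_carrier [OF P])
  show ?thesis
  proof (rule GG.subgroupI)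
    show "Qx G P x \<subseteq> carrier (G \<times>\<times> G)"
      using PG x unfolding Qx_def by auto
    have "(\<one>, \<one>) \<in> Qx G P x"
      using subgroup.one_closed [OF P] x unfolding Qx_def by force
    then show "Qx G P x \<noteq> {}" by blast
  next
    fix q assume "q \<in> Qx G P x"
    then obtain c where q: "q = (c, inv x \<otimes> c \<otimes> x)" "c \<in> P" "inv x \<otimes> c \<otimes> x \<in> P"
      unfolding Qx_def by blast
    have cG: "c \<in> carrier G" using PG q by blast
    have "inv x \<otimes> inv c \<otimes> x = inv (inv x \<otimes> c \<otimes> x)"
      using cG x by (simp add: inv_mult_group m_assoc)
    then show "inv\<^bsub>G \<times>\<times> G\<^esub> q \<in> Qx G P x"
      using q cG x P unfolding Qx_def by (auto simp: subgroup.m_inv_closed is_group)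
  next
    fix q r assume "q \<in> Qx G P x" "r \<in> Qx G P x"
    then obtain c d where q: "q = (c, inv x \<otimes> c \<otimes> x)" "c \<in> P" "inv x \<otimes> c \<otimes> x \<in> P"
      and r: "r = (d, inv x \<otimes> d \<otimes> x)" "d \<in> P" "inv x \<otimes> d \<otimes> x \<in> P"
      unfolding Qx_def by blast
    have "inv x \<otimes> (c \<otimes> d) \<otimes> x = (inv x \<otimes> c \<otimes> x) \<otimes> (inv x \<otimes> d \<otimes> x)"
      using PG q r x by (simp add: m_assoc)
    then show "q \<otimes>\<^bsub>G \<times>\<times> G\<^esub> r \<in> Qx G P x"
      using q r P unfolding Qx_def by (auto simp: subgroup.m_closed)
  qed
qed

lemma Quvx_eq_diag_centralizer:
  assumes P: "subgroup P G" and u: "u \<in> P" and v: "v \<in> P" and x: "x \<in> carrier G"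
  shows "Quvx G P u v x = {(e, e) | e. e \<in> P \<and> e \<otimes> (u \<otimes> x \<otimes> inv v) = (u \<otimes> x \<otimes> inv v) \<otimes> e}"
    (is "_ = {(e, e) | e. e \<in> P \<and> e \<otimes> ?y = ?y \<otimes> e}")
proof -
  have PG: "\<And>e. e \<in> P \<Longrightarrow> e \<in> carrier G" by (rule subgroup.mem_carrier [OF P])
  have uG: "u \<in> carrier G" and vG: "v \<in> carrier G" and yG: "?y \<in> carrier G"
    using u v x PG by auto
  have conj_rep: "inv ?y \<otimes> (u \<otimes> c \<otimes> inv u) \<otimes> ?y = v \<otimes> (inv x \<otimes> c \<otimes> x) \<otimes> inv v"
    if "c \<in> carrier G" for c using uG x vG that by (simp add: inv_mult_group m_assoc)
  show ?thesis
  proof (intro Set.set_eqI iffI)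
    fix q assume "q \<in> Quvx G P u v x"
    then obtain e c where q: "q = (e, e)" "e \<in> P" and c: "c \<in> P"
      and e: "e = u \<otimes> c \<otimes> inv u" "e = v \<otimes> (inv x \<otimes> c \<otimes> x) \<otimes> inv v"
      unfolding Quvx_def Qx_def Delta_def by blast
    have "inv ?y \<otimes> e \<otimes> ?y = v \<otimes> (inv x \<otimes> c \<otimes> x) \<otimes> inv v"
      unfolding e(1) by (rule conj_rep [OF PG [OF c]])
    also have "\<dots> = e" by (rule e(2) [symmetric])
    finally have "inv ?y \<otimes> e \<otimes> ?y = e" .
    then show "q \<in> {(e, e) | e. e \<in> P \<and> e \<otimes> ?y = ?y \<otimes> e}"
      using q conj_fixed_iff_commute [OF PG [OF q(2)] yG] by blast
  next
    fix q assume "q \<in> {(e, e) | e. e \<in> P \<and> e \<otimes> ?y = ?y \<otimes> e}"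
    then obtain e where q: "q = (e, e)" "e \<in> P" and comm: "e \<otimes> ?y = ?y \<otimes> e" by blast
    have fixed: "inv ?y \<otimes> e \<otimes> ?y = e"
      using conj_fixed_iff_commute [OF PG [OF q(2)] yG] comm by simp
    define c where "c = inv u \<otimes> e \<otimes> u"
    have cG: "c \<in> carrier G" and eG: "e \<in> carrier G" unfolding c_def using PG q uG by auto
    have e_c: "e = u \<otimes> c \<otimes> inv u" unfolding c_def using uG eG by (simp add: m_assoc)
    have "v \<otimes> (inv x \<otimes> c \<otimes> x) \<otimes> inv v = inv ?y \<otimes> e \<otimes> ?y"
      unfolding e_c by (rule conj_rep [OF cG, symmetric])
    with fixed have e_cx: "e = v \<otimes> (inv x \<otimes> c \<otimes> x) \<otimes> inv v" by simp
    have "inv x \<otimes> c \<otimes> x = inv v \<otimes> (v \<otimes> (inv x \<otimes> c \<otimes> x) \<otimes> inv v) \<otimes> v"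
      using vG x cG by (simp add: m_assoc)
    also have "\<dots> = inv v \<otimes> e \<otimes> v" by (simp only: e_cx)
    finally have c_x: "inv x \<otimes> c \<otimes> x = inv v \<otimes> e \<otimes> v" .
    have "c \<in> P"
      unfolding c_def using P u q by (simp add: subgroup.m_closed subgroup.m_inv_closed)
    moreover have "inv x \<otimes> c \<otimes> x \<in> P"
      unfolding c_x using P v q by (simp add: subgroup.m_closed subgroup.m_inv_closed)
    ultimately show "q \<in> Quvx G P u v x"
      unfolding Quvx_def Qx_def Delta_def using q e_c e_cx by blast
  qed
qed

lemma Quvx_subgroup:
  assumes "subgroup P G" "u \<in> P" "v \<in> P" "x \<in> carrier G"
  shows "subgroup (Quvx G P u v x) (G \<times>\<times> G)"
  unfolding Quvx_eq_diag_centralizer [OF assms]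
  using assms by (intro diag_centralizer_subgroup) (auto intro: subgroup.mem_carrier)

lemma twisted_rep_eq:
  assumes P: "subgroup P G" and u: "u \<in> P" and v: "v \<in> P" and x: "x \<in> carrier G"
    and w: "(w, w) \<in> Quvx G P u v x" and a: "a \<in> carrier G"
  shows "(w \<otimes> u \<otimes> a) \<otimes> x \<otimes> inv (w \<otimes> v \<otimes> (inv x \<otimes> a \<otimes> x)) = u \<otimes> x \<otimes> inv v"
    (is "_ = ?y")
proof -
  have uG: "u \<in> carrier G" and vG: "v \<in> carrier G" using u v by (simp_all add: subgroup.mem_carrier [OF P])
  have "w \<in> P" and w_comm: "w \<otimes> ?y = ?y \<otimes> w"
    using w unfolding Quvx_eq_diag_centralizer [OF P u v x] by auto
  from \<open>w \<in> P\<close> have wG: "w \<in> carrier G" by (rule subgroup.mem_carrier [OF P])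
  have "(w \<otimes> u \<otimes> a) \<otimes> x \<otimes> inv (w \<otimes> v \<otimes> (inv x \<otimes> a \<otimes> x))
          = w \<otimes> ?y \<otimes> inv w"
    using uG vG wG x a by (simp add: inv_mult_group m_assoc)
  also have "\<dots> = ?y \<otimes> w \<otimes> inv w" by (simp only: w_comm)
  also have "\<dots> = ?y" using uG vG wG x by (simp add: m_assoc)
  finally show ?thesis .
qed

context
  fixes P u v x w a
  assumes P: "subgroup P G" and u: "u \<in> P" and v: "v \<in> P" and x: "x \<in> carrier G"
    and w: "(w, w) \<in> Quvx G P u v x" and a: "(a, inv x \<otimes> a \<otimes> x) \<in> Qx G P x"
begin

lemma twist_factors_mem:
  "w \<in> P" "a \<in> P" "inv x \<otimes> a \<otimes> x \<in> P"
  using w a unfolding Quvx_def Delta_def Qx_def by auto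

lemma Quvx_twist:
  "Quvx G P (w \<otimes> u \<otimes> a) (w \<otimes> v \<otimes> (inv x \<otimes> a \<otimes> x)) x = Quvx G P u v x"
proof -
  have "w \<otimes> u \<otimes> a \<in> P" "w \<otimes> v \<otimes> (inv x \<otimes> a \<otimes> x) \<in> P"
    using P u v twist_factors_mem by (simp_all add: subgroup.m_closed)
  with twisted_rep_eq [OF P u v x w] twist_factors_mem P show ?thesis
    by (simp add: Quvx_eq_diag_centralizer [OF P _ _ x] Quvx_eq_diag_centralizer [OF P u v x]
        subgroup.mem_carrier)
qed

lemma theta_map_twist:
  "theta_map G M s (w \<otimes> u \<otimes> a) (w \<otimes> v \<otimes> (inv x \<otimes> a \<otimes> x)) x = theta_map G M s u v x"
  using twisted_rep_eq [OF P u v x w] twist_factors_mem(2) P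
  unfolding theta_map_def by (simp add: subgroup.mem_carrier)

lemma double_coset_twist:
  "(Quvx G P (w \<otimes> u \<otimes> a) (w \<otimes> v \<otimes> (inv x \<otimes> a \<otimes> x)) x
      <#>\<^bsub>G \<times>\<times> G\<^esub> {(w \<otimes> u \<otimes> a, w \<otimes> v \<otimes> (inv x \<otimes> a \<otimes> x))}) <#>\<^bsub>G \<times>\<times> G\<^esub> Qx G P x
   = (Quvx G P u v x <#>\<^bsub>G \<times>\<times> G\<^esub> {(u, v)}) <#>\<^bsub>G \<times>\<times> G\<^esub> Qx G P x"
proof -
  interpret GG: group "G \<times>\<times> G" by (rule DirProd_group [OF is_group is_group])
  have "(u, v) \<in> carrier (G \<times>\<times> G)" using u v by (simp add: subgroup.mem_carrier [OF P])
  from GG.double_coset_change_rep [OF Quvx_subgroup [OF P u v x] Qx_subgroup [OF P x] w this a]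
  show ?thesis by (simp add: Quvx_twist)
qed

lemma pi_map_twist:
  "pi_map G P s (w \<otimes> u \<otimes> a) (w \<otimes> v \<otimes> (inv x \<otimes> a \<otimes> x)) x = pi_map G P s u v x"
  unfolding pi_map_def [abs_def] delta_ind_def double_coset_twist ..

end

end

theorem proposition4p3:
  fixes G :: "('g, 'z) monoid_scheme"
    and p :: nat
    and b i :: "'g \<Rightarrow> 'k::field"
    and P Y :: "'g set" and W :: "('g \<times> 'g) set"
    and \<delta> :: "('g \<Rightarrow> 'k) set"
    and s :: "('g \<Rightarrow> 'k) \<Rightarrow> ('g \<Rightarrow> 'k)"
    and x u v w a :: 'g
  assumes grp: "group G" and fin: "finite (carrier G)"
    and char: "prime p" "CHAR('k) = p"
    and alg_closed: "\<forall>f :: 'k poly. degree f \<noteq> 0 \<longrightarrow> (\<exists>z. poly f z = 0)"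
    and blk: "block_idempotent G b"
    and dpg: "defect_pointed_group G p b P \<delta>"
    and src: "i \<in> \<delta>"
    and Yrep: "dcoset_reps_subset G P Y"
    and s_bij: "bij_betw s (source_alg G i) (perm_mod G P Y)"
    and s_add: "\<forall>m\<in>source_alg G i. \<forall>m'\<in>source_alg G i. s (m + m') = s m + s m'"
    and s_smult: "\<forall>c. \<forall>m\<in>source_alg G i. s (\<lambda>g. c * m g) = (\<lambda>g. c * s m g)"
    and s_equiv: "\<forall>u'\<in>P. \<forall>v'\<in>P. \<forall>m\<in>source_alg G i.
                    s (bimod_act G (u', v') m) = perm_act G (u', v') (s m)"
    and xY: "x \<in> Y"
    and uv: "u \<in> P" "v \<in> P"
    and W: "subgroup W (G \<times>\<times> G)" "W \<subseteq> Quvx G P u v x"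
    and w: "w \<in> P" "(w, w) \<in> Quvx G P u v x"
    and a: "(a, inv\<^bsub>G\<^esub> x \<otimes>\<^bsub>G\<^esub> a \<otimes>\<^bsub>G\<^esub> x) \<in> Qx G P x"
  defines "u' \<equiv> w \<otimes>\<^bsub>G\<^esub> u \<otimes>\<^bsub>G\<^esub> a"
    and "v' \<equiv> w \<otimes>\<^bsub>G\<^esub> v \<otimes>\<^bsub>G\<^esub> (inv\<^bsub>G\<^esub> x \<otimes>\<^bsub>G\<^esub> a \<otimes>\<^bsub>G\<^esub> x)"
  shows "(\<forall>n. \<forall>X \<in> Hcoh (G \<times>\<times> G) W UNIV triv_act n.
             theta_star G P (source_alg G i) s u' v' x W n X
               = theta_star G P (source_alg G i) s u v x W n X)
       \<and> Quvx G P u' v' x = Quvx G P u v x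
       \<and> (\<forall>n. \<forall>X \<in> Hcoh (G \<times>\<times> G) (Quvx G P u v x) UNIV triv_act n.
             gamma_map G P (source_alg G i) s u' v' x n X
               = gamma_map G P (source_alg G i) s u v x n X)
       \<and> (\<forall>n. \<forall>X \<in> Hcoh (G \<times>\<times> G) W (source_alg G i) (bimod_act G) n.
             pi_star G P s u' v' x W n X = pi_star G P s u v x W n X)"
proof -
  interpret group G by (rule grp)
  have P: "subgroup P G"
    using dpg unfolding defect_pointed_group_def p_subgroup_def by blast
  have x: "x \<in> carrier G" using Yrep xY unfolding dcoset_reps_subset_def by blast
  note twist = theta_map_twist [OF P uv x w(2) a] Quvx_twist [OF P uv x w(2) a]
    pi_map_twist [OF P uv x w(2) a]
  show ?thesis
    unfolding u'_def v'_def theta_star_def gamma_map_def pi_star_def twist by simp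
qed

end
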